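(* Let $i\ge 2$ be an integer and let $C(i)$, $B(i)$ be as defined in the context. (a) $C(i)$ is an $\mathbb{F}$-linear $[2i,2i-1,1]$-code which is $(2i-1)$-bounded relative to the ordered basis $B(i)$. (b) Let $j$ be an integer with $1\le j\le 4i^2-6i+1$. Then ${\sf Code}(B(i),j)$ is an $\mathbb{F}$-linear $[n_j,k_j,d_j]$-code which is $u_j$-bounded relative to the ordered basis ${\sf Basis}(B(i),j)$, where \[ n_j=2i\prod_{\ell=1}^{j}(2i-1+\ell),\quad k_j=2i-1+j,\quad d_j=\prod_{\ell=1}^{j}(2i-1+\ell),\quad u_j=(2i-1)\prod_{\ell=1}^{j}(2i-2+\ell). \]
   Context: $\mathbb{F}$ is an arbitrary field and vectors in $\mathbb{F}^n$ are column vectors. The weight $\mathrm{wt}(x)$ of $x\in\mathbb{F}^n$ is its number of nonzero coordinates. An $[n,k,d]$-code is a $k$-dimensional subspace of $\mathbb{F}^n$ whose minimum distance (the minimum weight of a nonzero codeword) is $d$. Boundedness: let $u$ be a positive integer and let $C$ be an $[n,k,d]$-code with ordered basis $B=(a_1,\dots,a_k)$. Then $C$ is $u$-bounded relative to $B$ if all three of the following hold: (i) $\mathrm{wt}(a_j)=u$ for every $j$; (ii) $\mathrm{wt}\big(\sum_{j=1}^k a_j\big)=d$; (iii) $u\ge d(1+k^{-1})$. Construction: for an ordered basis $B=(a_1,\dots,a_k)$ of a code $C\le\mathbb{F}^n$, set $a_0:=0\in\mathbb{F}^n$. For $m=1,\dots,k+1$, let $a'_m\in\mathbb{F}^{n(k+1)}$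 be the column vector made of $k+1$ blocks of length $n$. Its $r$-th block, for $r=1,\dots,k+1$, is $a_{r-m}$, where the subscript is read modulo $k+1$ with representatives in $\{0,\dots,k\}$. Thus $a'_1=(0,a_1,\dots,a_k)^T$, $a'_2=(a_k,0,a_1,\dots,a_{k-1})^T$, …, $a'_{k+1}=(a_1,\dots,a_k,0)^T$ in block form. Define ${\sf Basis}(B)=(a'_1,\dots,a'_{k+1})$, and let ${\sf Code}(B)\le\mathbb{F}^{n(k+1)}$ be its $\mathbb{F}$-linear span. Iteration: ${\sf Code}(B,1)={\sf Code}(B)$ and ${\sf Basis}(B,1)={\sf Basis}(B)$. For $i\ge2$, ${\sf Code}(B,i)={\sf Code}({\sf Basis}(B,i-1))$ and ${\sf Basis}(B,i)={\sf Basis}({\sf Basis}(B,i-1))$. Matrices: $\mathcal{A}_1=\begin{bmatrix}0&-1\\1&0\end{bmatrix}$ and $\mathcal{B}_1=\begin{bmatrix}1&-1\\-1&1\end{bmatrix}$. Recursively, for $i\ge1$, $\mathcal{A}_{i+1}=\begin{bmatrix}\mathcal{A}_1&\mathcal{B}_i\\-\mathcal{B}_i^T&\mathcal{A}_i\end{bmatrix}$ and $\mathcal{B}_{i+1}=[\mathcal{B}_1\ \mathcal{B}_i]$, as block matrices over $\mathbb{F}$. Thus $\mathcal{A}_i\in\mathbb{F}^{2i\times 2i}$. Codes $C(i)$: write $\mathcal{A}_i=[a_1,\dots,a_{2i}]$ by columns. Then $B(i)=(a_1,\dots,a_{2i-1})$, and $C(i)\le\mathbb{F}^{2i}$ is the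 $\mathbb{F}$-linear span of $B(i)$. The columns of $\mathcal{A}_i$ are linearly independent, so $B(i)$ is an ordered basis of $C(i)$. *)

theory Defs
  imports Complex_Main
begin

definition zero_vec :: "nat \<Rightarrow> 'a::field list" where
  "zero_vec n = replicate n 0"

definition wt :: "'a::field list \<Rightarrow> nat" where
  "wt v = length (filter (\<lambda>x. x \<noteq> 0) v)"

definition lincomb :: "nat \<Rightarrow> (nat \<Rightarrow> 'a::field) \<Rightarrow> 'a list list \<Rightarrow> 'a list" where
  "lincomb n c vs = map (\<lambda>r. \<Sum>j<length vs. c j * (vs ! j) ! r) [0..<n]"

definition span_vecs :: "nat \<Rightarrow> 'a::field list list \<Rightarrow> 'a list set" where
  "span_vecs n vs = range (\<lambda>c. lincomb n c vs)"

definition lin_indep_vecs :: "nat \<Rightarrow> 'a::field list list \<Rightarrow> bool" where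
  "lin_indep_vecs n vs \<longleftrightarrow>
     (\<forall>c. lincomb n c vs = zero_vec n \<longrightarrow> (\<forall>j<length vs. c j = 0))"

definition is_basis :: "nat \<Rightarrow> 'a::field list set \<Rightarrow> 'a list list \<Rightarrow> bool" where
  "is_basis n C vs \<longleftrightarrow> (\<forall>v\<in>set vs. length v = n) \<and> lin_indep_vecs n vs \<and> span_vecs n vs = C"

definition is_subspace :: "nat \<Rightarrow> 'a::field list set \<Rightarrow> bool" where
  "is_subspace n C \<longleftrightarrow> (\<forall>v\<in>C. length v = n) \<and> zero_vec n \<in> C \<and>
     (\<forall>v\<in>C. \<forall>w\<in>C. map2 (+) v w \<in> C) \<and> (\<forall>a. \<forall>v\<in>C. map ((*) a) v \<in> C)"

definition is_min_dist :: "nat \<Rightarrow> 'a::field list set \<Rightarrow> nat \<Rightarrow> bool" where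
  "is_min_dist n C d \<longleftrightarrow> (\<exists>x\<in>C. x \<noteq> zero_vec n \<and> wt x = d) \<and>
     (\<forall>x\<in>C. x \<noteq> zero_vec n \<longrightarrow> d \<le> wt x)"

definition is_code :: "nat \<Rightarrow> nat \<Rightarrow> nat \<Rightarrow> 'a::field list set \<Rightarrow> bool" where
  "is_code n k d C \<longleftrightarrow> is_subspace n C \<and> (\<exists>vs. is_basis n C vs \<and> length vs = k) \<and> is_min_dist n C d"

definition vsum :: "nat \<Rightarrow> 'a::field list list \<Rightarrow> 'a list" where
  "vsum n vs = map (\<lambda>r. \<Sum>j<length vs. (vs ! j) ! r) [0..<n]"

definition u_bounded :: "nat \<Rightarrow> nat \<Rightarrow> 'a::field list set \<Rightarrow> 'a list list \<Rightarrow> bool" where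
  "u_bounded n u C B \<longleftrightarrow> is_basis n C B \<and>
     (\<forall>j<length B. wt (B ! j) = u) \<and>
     is_min_dist n C (wt (vsum n B)) \<and>
     real u \<ge> real (wt (vsum n B)) * (1 + 1 / real (length B))"

text \<open>The construction Basis(B); indices are 0-based: m,r in {0..k}, block r of a'_m is
  a_{(r-m) mod (k+1)} with a_0 = 0 and a_s = B!(s-1).\<close>
definition cbasis :: "nat \<Rightarrow> 'a::field list list \<Rightarrow> 'a list list" where
  "cbasis n B = (let k = length B in
     map (\<lambda>m. concat (map (\<lambda>r. let s = (r + (k + 1) - m) mod (k + 1) in
                                  if s = 0 then zero_vec n else B ! (s - 1)) [0..<k+1])) [0..<k+1])"

definition basis_step :: "nat \<times> 'a::field list list \<Rightarrow> nat \<times> 'a list list" where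
  "basis_step p = (fst p * (length (snd p) + 1), cbasis (fst p) (snd p))"

definition Basis_it :: "nat \<Rightarrow> nat \<Rightarrow> 'a::field list list \<Rightarrow> nat \<times> 'a list list" where
  "Basis_it j n B = (basis_step ^^ j) (n, B)"

definition Code_it :: "nat \<Rightarrow> nat \<Rightarrow> 'a::field list list \<Rightarrow> 'a list set" where
  "Code_it j n B = span_vecs (fst (Basis_it j n B)) (snd (Basis_it j n B))"

definition A1 :: "nat \<Rightarrow> nat \<Rightarrow> 'a::field" where
  "A1 r c = (if r = 0 \<and> c = 1 then -1 else if r = 1 \<and> c = 0 then 1 else 0)"

definition B1 :: "nat \<Rightarrow> nat \<Rightarrow> 'a::field" where
  "B1 r c = (if r = c then 1 else -1)"

text \<open>Matrices as 0-indexed entry functions; Bmat i is 2 x 2i, Amat i is 2i x 2i (i >= 1).\<close>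
fun Bmat :: "nat \<Rightarrow> nat \<Rightarrow> nat \<Rightarrow> 'a::field" where
  "Bmat 0 r c = 0"
| "Bmat (Suc 0) r c = B1 r c"
| "Bmat (Suc (Suc i)) r c = (if c < 2 then B1 r c else Bmat (Suc i) r (c - 2))"

fun Amat :: "nat \<Rightarrow> nat \<Rightarrow> nat \<Rightarrow> 'a::field" where
  "Amat 0 r c = 0"
| "Amat (Suc 0) r c = A1 r c"
| "Amat (Suc (Suc i)) r c =
     (if r < 2 then (if c < 2 then A1 r c else Bmat (Suc i) r (c - 2))
      else (if c < 2 then - Bmat (Suc i) c (r - 2) else Amat (Suc i) (r - 2) (c - 2)))"

definition Bi :: "nat \<Rightarrow> 'a::field list list" where
  "Bi i = map (\<lambda>c. map (\<lambda>r. Amat i r c) [0..<2*i]) [0..<2*i-1]"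

definition Ci :: "nat \<Rightarrow> 'a::field list set" where
  "Ci i = span_vecs (2*i) (Bi i)"

end

theory Submission
  imports Defs
begin

(* Write B = (a_1, ..., a_k).  Block q of the codeword sum_m c_m a'_m of Code(B) is the codeword
   sum_j c_(sigma_q j) a_j of C, where sigma_q is a bijection from the indices of B onto the
   indices m <> q.  Hence the a'_m are independent (every c_m is a coefficient in some block); each
   a'_m has weight k u; their sum consists of k + 1 copies of sum_j a_j and has weight (k + 1) d; and
   a nonzero codeword either has a single nonzero coefficient, so weight k u >= (k + 1) d by
   u-boundedness, or has all k + 1 blocks nonzero, so weight >= (k + 1) d.  Thus Code(B) is an
   [n (k+1), k+1, (k+1) d]-code whose basis vectors have weight k u, and it is bounded again as long
   as the inequality (iii) holds for these new parameters.
   The columns of A_i are, up to the signs (-1)^(r+c), the pattern sgn (c - r): each has a single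
   zero entry and B(i) sums to the last unit vector, so C(i) is (2i-1)-bounded with d = 1.  Along the
   iteration, inequality (iii) for the j-th code telescopes to 2i + j <= (2i - 1)^2, that is,
   j <= 4i^2 - 6i + 1. *)

section \<open>Weights and linear combinations\<close>

lemma length_lincomb [simp]: "length (lincomb n c vs) = n"
  by (simp add: lincomb_def)

lemma nth_lincomb: "p < n \<Longrightarrow> lincomb n c vs ! p = (\<Sum>j<length vs. c j * vs ! j ! p)"
  by (simp add: lincomb_def)

lemma lincomb_eq_zero_vec: "(\<And>j. j < length vs \<Longrightarrow> c j = 0) \<Longrightarrow> lincomb n c vs = zero_vec n"
  by (simp add: lincomb_def zero_vec_def map_replicate_const)

lemma lincomb_single:
  assumes "j0 < length vs" and "\<And>j. j < length vs \<Longrightarrow> j \<noteq> j0 \<Longrightarrow> c j = 0"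
  shows "lincomb n c vs = map (\<lambda>r. c j0 * vs ! j0 ! r) [0..<n]"
proof -
  have "(\<Sum>j<length vs. c j * vs ! j ! r) = c j0 * vs ! j0 ! r" for r
    using assms by (subst sum.remove[of _ j0]) (auto intro: sum.neutral)
  then show ?thesis by (simp add: lincomb_def)
qed

lemma lincomb_unit:
  assumes "m < length vs" "length (vs ! m) = n"
  shows "lincomb n (\<lambda>j. if j = m then 1 else 0) vs = vs ! m"
  using assms by (simp add: lincomb_single[OF assms(1)] map_nth[of "vs ! m", simplified assms(2)])

lemma vsum_eq_lincomb: "vsum n vs = lincomb n (\<lambda>_. 1) vs"
  by (simp add: vsum_def lincomb_def)

lemma is_subspace_span_vecs:
  assumes "\<forall>v\<in>set vs. length v = n"
  shows "is_subspace n (span_vecs n vs)"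
proof -
  have "map2 (+) (lincomb n c vs) (lincomb n c' vs) = lincomb n (\<lambda>j. c j + c' j) vs" for c c'
    by (simp add: lincomb_def map2_map_map sum.distrib distrib_right)
  moreover have "map ((*) a) (lincomb n c vs) = lincomb n (\<lambda>j. a * c j) vs" for a c
    by (simp add: lincomb_def sum_distrib_left mult.assoc)
  moreover have "zero_vec n = lincomb n (\<lambda>_. 0) vs"
    by (simp add: lincomb_eq_zero_vec)
  ultimately show ?thesis
    unfolding is_subspace_def span_vecs_def by (auto simp del: map2_map_map)
qed

lemma wt_conv_card: "wt v = card {r. r < length v \<and> v ! r \<noteq> 0}"
  by (simp add: wt_def length_filter_conv_card)

lemma wt_map_upt: "wt (map f [0..<N]) = card {r. r < N \<and> f r \<noteq> 0}"
  by (auto simp: wt_conv_card intro!: arg_cong[where f = card])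

lemma wt_concat_map_upt: "wt (concat (map f [0..<K])) = (\<Sum>q<K. wt (f q))"
  by (induction K) (simp_all add: wt_def)

lemma wt_eq_0_iff: "wt v = 0 \<longleftrightarrow> v = zero_vec (length v)"
proof -
  have "wt v = 0 \<longleftrightarrow> (\<forall>x\<in>set v. x = 0)"
    by (simp add: wt_def filter_empty_conv)
  also have "\<dots> \<longleftrightarrow> v = zero_vec (length v)"
    unfolding zero_vec_def by (metis in_set_replicate replicate_length_same)
  finally show ?thesis .
qed

lemma wt_zero_vec [simp]: "wt (zero_vec n) = 0"
  by (simp add: wt_def zero_vec_def)

lemma wt_lincomb_single:
  assumes "j0 < length vs" "length (vs ! j0) = n" "c j0 \<noteq> 0"
    and "\<And>j. j < length vs \<Longrightarrow> j \<noteq> j0 \<Longrightarrow> c j = 0"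
  shows "wt (lincomb n c vs) = wt (vs ! j0)"
  using assms by (auto simp: lincomb_single[of j0] wt_map_upt wt_conv_card intro!: arg_cong[where f = card])

lemma length_concat_map_upt:
  "(\<And>q. q < K \<Longrightarrow> length (f q) = n) \<Longrightarrow> length (concat (map f [0..<K])) = K * n"
  by (induction K) auto

lemma nth_concat_map_upt:
  assumes "\<And>q. q < K \<Longrightarrow> length (f q) = n" "q < K" "p < n"
  shows "concat (map f [0..<K]) ! (q * n + p) = f q ! p"
  using assms
proof (induction K)
  case (Suc K)
  have len: "length (concat (map f [0..<K])) = K * n"
    using Suc.prems(1) by (intro length_concat_map_upt) auto
  show ?case
  proof (cases "q < K")
    case True
    have "q * n + p < Suc q * n" using Suc.prems(3) by simp
    also have "\<dots> \<le> K * n" using True by (intro mult_le_mono1) simp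
    finally show ?thesis using Suc True len by (simp add: nth_append)
  next
    case False
    then have "q = K" using Suc.prems(2) by simp
    then show ?thesis using len by (simp add: nth_append)
  qed
qed simp

lemma concat_map_upt_eq_zero_vec:
  assumes "\<And>q. q < K \<Longrightarrow> length (f q) = n" "concat (map f [0..<K]) = zero_vec m" "q < K"
  shows "f q = zero_vec n"
proof -
  have "(\<Sum>q<K. wt (f q)) = 0"
    using assms(2) by (simp flip: wt_concat_map_upt)
  then have "wt (f q) = 0"
    using assms(3) by simp
  then show ?thesis
    using assms(1,3) wt_eq_0_iff by metis
qed

lemma lincomb_concat_blocks:
  assumes "\<And>m q. m < M \<Longrightarrow> q < K \<Longrightarrow> length (f m q) = n"
  shows "lincomb (K * n) c (map (\<lambda>m. concat (map (f m) [0..<K])) [0..<M])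
       = concat (map (\<lambda>q. lincomb n c (map (\<lambda>m. f m q) [0..<M])) [0..<K])"
proof (rule nth_equalityI)
  show "length (lincomb (K * n) c (map (\<lambda>m. concat (map (f m) [0..<K])) [0..<M]))
      = length (concat (map (\<lambda>q. lincomb n c (map (\<lambda>m. f m q) [0..<M])) [0..<K]))"
    by (simp add: length_concat_map_upt)
next
  fix x assume "x < length (lincomb (K * n) c (map (\<lambda>m. concat (map (f m) [0..<K])) [0..<M]))"
  then have x: "x < K * n" by simp
  define q p where "q = x div n" and "p = x mod n"
  have "0 < n" using x by (cases n) auto
  have qp: "x = q * n + p" "q < K" "p < n"
    using x \<open>0 < n\<close> by (simp_all add: q_def p_def less_mult_imp_div_less)
  have "lincomb (K * n) c (map (\<lambda>m. concat (map (f m) [0..<K])) [0..<M]) ! x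
      = (\<Sum>m<M. c m * f m q ! p)"
    using x qp assms by (simp add: nth_lincomb nth_concat_map_upt)
  also have "\<dots> = concat (map (\<lambda>q. lincomb n c (map (\<lambda>m. f m q) [0..<M])) [0..<K]) ! x"
    using qp by (simp add: nth_lincomb nth_concat_map_upt)
  finally show "lincomb (K * n) c (map (\<lambda>m. concat (map (f m) [0..<K])) [0..<M]) ! x
      = concat (map (\<lambda>q. lincomb n c (map (\<lambda>m. f m q) [0..<M])) [0..<K]) ! x" .
qed

section \<open>The construction Code(B)\<close>

(* Block q of the m-th vector of cbasis n B is a_((q - m) mod (k + 1)), with a_0 = 0 and
   a_(s+1) = B ! s; so B ! j sits in block q of the vector with index cyclic_index k q j. *)
definition cyclic_index :: "nat \<Rightarrow> nat \<Rightarrow> nat \<Rightarrow> nat" where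
  "cyclic_index k q j = (if j < q then q - 1 - j else q + k - j)"

lemma bij_betw_cyclic_index:
  assumes "q < k + 1"
  shows "bij_betw (cyclic_index k q) {..<k} ({..<k + 1} - {q})"
  by (rule bij_betw_byWitness[where f' = "cyclic_index k q"]) (use assms in \<open>auto simp: cyclic_index_def\<close>)

definition cblock :: "nat \<Rightarrow> 'a::field list list \<Rightarrow> nat \<Rightarrow> nat \<Rightarrow> 'a list" where
  "cblock n B m r = (let s = (r + (length B + 1) - m) mod (length B + 1) in
     if s = 0 then zero_vec n else B ! (s - 1))"

lemma cbasis_conv_cblock:
  "cbasis n B = map (\<lambda>m. concat (map (cblock n B m) [0..<length B + 1])) [0..<length B + 1]"
  unfolding cbasis_def cblock_def Let_def by simp

lemma length_cblock:
  assumes "\<forall>v\<in>set B. length v = n"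
  shows "length (cblock n B m r) = n"
proof -
  define s where "s = (r + (length B + 1) - m) mod (length B + 1)"
  have "s < length B + 1"
    unfolding s_def by (rule mod_less_divisor) simp
  then have "B ! (s - 1) \<in> set B" if "s \<noteq> 0"
    using that by (intro nth_mem) linarith
  then show ?thesis
    using assms unfolding cblock_def Let_def s_def[symmetric] by (auto simp: zero_vec_def)
qed

lemma cblock_diag: "cblock n B q q = zero_vec n"
  by (simp add: cblock_def)

lemma cblock_cyclic_index:
  assumes "q < length B + 1" "j < length B"
  shows "cblock n B (cyclic_index (length B) q j) q = B ! j"
proof -
  have "(q + (length B + 1) - cyclic_index (length B) q j) mod (length B + 1) = Suc j"
    using assms by (auto simp: cyclic_index_def mod_if)
  then show ?thesis
    by (simp add: cblock_def)
qed

lemma lincomb_cblock_column: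
  assumes "q < k + 1" "length B = k"
  shows "lincomb n c (map (\<lambda>m. cblock n B m q) [0..<k + 1]) = lincomb n (\<lambda>j. c (cyclic_index k q j)) B"
proof (rule nth_equalityI)
  fix p assume "p < length (lincomb n c (map (\<lambda>m. cblock n B m q) [0..<k + 1]))"
  then have p: "p < n" by simp
  have "lincomb n c (map (\<lambda>m. cblock n B m q) [0..<k + 1]) ! p = (\<Sum>m<k + 1. c m * cblock n B m q ! p)"
    using p by (simp add: nth_lincomb del: upt_Suc)
  also have "\<dots> = (\<Sum>m\<in>{..<k + 1} - {q}. c m * cblock n B m q ! p)"
    using assms(1) p by (intro sum.mono_neutral_right) (auto simp: cblock_diag zero_vec_def)
  also have "\<dots> = (\<Sum>j<k. c (cyclic_index k q j) * cblock n B (cyclic_index k q j) q ! p)"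
    using bij_betw_cyclic_index[OF assms(1)] by (rule sum.reindex_bij_betw[symmetric])
  also have "\<dots> = lincomb n (\<lambda>j. c (cyclic_index k q j)) B ! p"
    using assms p by (simp add: nth_lincomb cblock_cyclic_index[where B = B, simplified assms(2)])
  finally show "lincomb n c (map (\<lambda>m. cblock n B m q) [0..<k + 1]) ! p
      = lincomb n (\<lambda>j. c (cyclic_index k q j)) B ! p" .
qed simp

lemma lincomb_cbasis:
  assumes "\<forall>v\<in>set B. length v = n" "length B = k"
  shows "lincomb (n * (k + 1)) c (cbasis n B)
       = concat (map (\<lambda>q. lincomb n (\<lambda>j. c (cyclic_index k q j)) B) [0..<k + 1])"
proof -
  have "lincomb ((k + 1) * n) c (cbasis n B)
      = concat (map (\<lambda>q. lincomb n c (map (\<lambda>m. cblock n B m q) [0..<k + 1])) [0..<k + 1])"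
    unfolding cbasis_conv_cblock assms(2) using assms by (intro lincomb_concat_blocks length_cblock)
  also have "\<dots> = concat (map (\<lambda>q. lincomb n (\<lambda>j. c (cyclic_index k q j)) B) [0..<k + 1])"
    using assms(2) by (intro arg_cong[where f = concat] map_cong refl lincomb_cblock_column) auto
  finally show ?thesis
    by (simp add: mult.commute)
qed

lemma length_cbasis [simp]: "length (cbasis n B) = length B + 1"
  by (simp add: cbasis_def Let_def)

lemma length_cbasis_nth:
  assumes "\<forall>v\<in>set B. length v = n" "m < length B + 1"
  shows "length (cbasis n B ! m) = n * (length B + 1)"
  using assms by (simp add: cbasis_conv_cblock length_concat_map_upt length_cblock del: upt_Suc)

lemma wt_lincomb_cbasis:
  assumes "\<forall>v\<in>set B. length v = n" "length B = k"
  shows "wt (lincomb (n * (k + 1)) c (cbasis n B))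
       = (\<Sum>q<k + 1. wt (lincomb n (\<lambda>j. c (cyclic_index k q j)) B))"
  by (simp only: lincomb_cbasis[OF assms] wt_concat_map_upt)

lemma lincomb_cbasis_block_eq_zero_vec:
  assumes "\<forall>v\<in>set B. length v = n" "length B = k"
    and "lincomb (n * (k + 1)) c (cbasis n B) = zero_vec (n * (k + 1))" "q < k + 1"
  shows "lincomb n (\<lambda>j. c (cyclic_index k q j)) B = zero_vec n"
proof (rule concat_map_upt_eq_zero_vec[where K = "k + 1"])
  show "concat (map (\<lambda>q. lincomb n (\<lambda>j. c (cyclic_index k q j)) B) [0..<k + 1]) = zero_vec (n * (k + 1))"
    using assms(3) by (simp only: lincomb_cbasis[OF assms(1,2)])
qed (use assms(4) in simp_all)

lemma lincomb_cyclic_index_neq_zero_vec: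
  assumes "lin_indep_vecs n B" "q < length B + 1" "m < length B + 1" "m \<noteq> q" "c m \<noteq> 0"
  shows "lincomb n (\<lambda>j. c (cyclic_index (length B) q j)) B \<noteq> zero_vec n"
proof
  assume zero: "lincomb n (\<lambda>j. c (cyclic_index (length B) q j)) B = zero_vec n"
  have "m \<in> cyclic_index (length B) q ` {..<length B}"
    using bij_betw_imp_surj_on[OF bij_betw_cyclic_index[OF assms(2)]] assms(3,4) by simp
  then obtain j where "j < length B" "m = cyclic_index (length B) q j"
    by auto
  then show False
    using assms(1,5) zero by (auto simp: lin_indep_vecs_def)
qed

lemma lin_indep_cbasis:
  assumes "lin_indep_vecs n B" "\<forall>v\<in>set B. length v = n" "1 \<le> length B"
  shows "lin_indep_vecs (n * (length B + 1)) (cbasis n B)"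
  unfolding lin_indep_vecs_def
proof (intro allI impI)
  fix c m
  assume zero: "lincomb (n * (length B + 1)) c (cbasis n B) = zero_vec (n * (length B + 1))"
    and "m < length (cbasis n B)"
  then have m: "m < length B + 1" by simp
  define q where "q = (if m = 0 then 1 else 0 :: nat)"
  have q: "q < length B + 1" "m \<noteq> q"
    using assms(3) by (auto simp: q_def)
  have "lincomb n (\<lambda>j. c (cyclic_index (length B) q j)) B = zero_vec n"
    using assms(2) zero q(1) by (rule lincomb_cbasis_block_eq_zero_vec[OF _ refl])
  then show "c m = 0"
    using lincomb_cyclic_index_neq_zero_vec[OF assms(1) q(1) m q(2)] by blast
qed

lemma wt_cbasis_block_single:
  assumes "\<forall>v\<in>set B. length v = n" "\<forall>j<length B. wt (B ! j) = u" "q < length B + 1"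
    and "m0 < length B + 1" "c m0 \<noteq> 0" "\<And>m. m < length B + 1 \<Longrightarrow> m \<noteq> m0 \<Longrightarrow> c m = 0"
  shows "wt (lincomb n (\<lambda>j. c (cyclic_index (length B) q j)) B) = (if q = m0 then 0 else u)"
proof -
  let ?k = "length B"
  have bij: "bij_betw (cyclic_index ?k q) {..<?k} ({..<?k + 1} - {q})"
    using assms(3) by (rule bij_betw_cyclic_index)
  show ?thesis
  proof (cases "q = m0")
    case True
    have "lincomb n (\<lambda>j. c (cyclic_index ?k q j)) B = zero_vec n"
    proof (rule lincomb_eq_zero_vec)
      fix j assume "j < ?k"
      then have "cyclic_index ?k q j \<in> {..<?k + 1} - {m0}"
        using bij_betw_apply[OF bij] True by simp
      then show "c (cyclic_index ?k q j) = 0"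
        using assms(6) by simp
    qed
    then show ?thesis
      using True by simp
  next
    case False
    then have "m0 \<in> cyclic_index ?k q ` {..<?k}"
      using bij_betw_imp_surj_on[OF bij] assms(4) by simp
    then obtain j0 where j0: "j0 < ?k" "cyclic_index ?k q j0 = m0"
      by auto
    have "wt (lincomb n (\<lambda>j. c (cyclic_index ?k q j)) B) = wt (B ! j0)"
    proof (rule wt_lincomb_single)
      fix j assume "j < ?k" "j \<noteq> j0"
      then have "cyclic_index ?k q j \<noteq> m0" "cyclic_index ?k q j < ?k + 1"
        using inj_on_eq_iff[OF bij_betw_imp_inj_on[OF bij]] bij_betw_apply[OF bij] j0 by auto
      then show "c (cyclic_index ?k q j) = 0"
        using assms(6) by blast
    qed (use j0 assms in auto)
    then show ?thesis
      using False j0 assms(2) by simp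
  qed
qed

lemma wt_lincomb_cbasis_single:
  assumes "\<forall>v\<in>set B. length v = n" "\<forall>j<length B. wt (B ! j) = u"
    and "m0 < length B + 1" "c m0 \<noteq> 0" "\<And>m. m < length B + 1 \<Longrightarrow> m \<noteq> m0 \<Longrightarrow> c m = 0"
  shows "wt (lincomb (n * (length B + 1)) c (cbasis n B)) = length B * u"
proof -
  let ?k = "length B"
  have "wt (lincomb (n * (?k + 1)) c (cbasis n B))
      = (\<Sum>q<?k + 1. wt (lincomb n (\<lambda>j. c (cyclic_index ?k q j)) B))"
    using assms(1) by (rule wt_lincomb_cbasis) simp
  also have "\<dots> = (\<Sum>q<?k + 1. if q = m0 then 0 else u)"
  proof (rule sum.cong)
    fix q assume q: "q \<in> {..<?k + 1}"
    show "wt (lincomb n (\<lambda>j. c (cyclic_index ?k q j)) B) = (if q = m0 then 0 else u)"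
      by (rule wt_cbasis_block_single) (use assms q in auto)
  qed simp
  also have "\<dots> = (\<Sum>q\<in>{..<?k + 1} - {m0}. u)"
    by (rule sum.mono_neutral_cong_right) auto
  also have "\<dots> = ?k * u"
    using assms(3) by simp
  finally show ?thesis .
qed

lemma wt_cbasis_nth:
  assumes "\<forall>v\<in>set B. length v = n" "\<forall>j<length B. wt (B ! j) = u" "m < length B + 1"
  shows "wt (cbasis n B ! m) = length B * u"
proof -
  have "cbasis n B ! m = lincomb (n * (length B + 1)) (\<lambda>j. if j = m then 1 else 0) (cbasis n B)"
    using assms(1,3) by (simp add: lincomb_unit length_cbasis_nth)
  then show ?thesis
    by (simp only:) (rule wt_lincomb_cbasis_single, use assms in simp_all)
qed

lemma wt_vsum_cbasis:
  assumes "\<forall>v\<in>set B. length v = n"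
  shows "wt (vsum (n * (length B + 1)) (cbasis n B)) = (length B + 1) * wt (vsum n B)"
  unfolding vsum_eq_lincomb lincomb_cbasis[OF assms refl] wt_concat_map_upt by simp

(* Boundedness relative to B with the basis weight u and the minimum distance d made explicit, and
   without inequality (iii), which is a hypothesis of the construction step rather than a property
   it propagates. *)
definition uniform_basis :: "nat \<Rightarrow> nat \<Rightarrow> nat \<Rightarrow> nat \<Rightarrow> 'a::field list list \<Rightarrow> bool" where
  "uniform_basis n k u d B \<longleftrightarrow> length B = k \<and> (\<forall>v\<in>set B. length v = n) \<and> lin_indep_vecs n B \<and>
     (\<forall>j<k. wt (B ! j) = u) \<and> wt (vsum n B) = d \<and> is_min_dist n (span_vecs n B) d"

lemma uniform_basis_imp_code_u_bounded:
  assumes "uniform_basis n k u d B" "1 \<le> k" "(k + 1) * d \<le> k * u"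
  shows "is_code n k d (span_vecs n B) \<and> u_bounded n u (span_vecs n B) B"
proof -
  have "real d * (1 + 1 / real k) = real ((k + 1) * d) / real k"
    using assms(2) by (simp add: field_simps)
  also have "\<dots> \<le> real (k * u) / real k"
    using assms(3) by (intro divide_right_mono of_nat_mono) simp_all
  also have "\<dots> = real u"
    using assms(2) by simp
  finally have "real d * (1 + 1 / real k) \<le> real u" .
  then show ?thesis
    using assms(1) is_subspace_span_vecs
    by (auto simp: uniform_basis_def is_code_def u_bounded_def is_basis_def)
qed

lemma min_wt_span_cbasis:
  assumes "uniform_basis n k u d B" "(k + 1) * d \<le> k * u"
    and "x \<in> span_vecs (n * (k + 1)) (cbasis n B)" "x \<noteq> zero_vec (n * (k + 1))"
  shows "(k + 1) * d \<le> wt x"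
proof -
  have B: "length B = k" "\<forall>v\<in>set B. length v = n" "lin_indep_vecs n B"
    "\<forall>j<k. wt (B ! j) = u" "is_min_dist n (span_vecs n B) d"
    using assms(1) by (auto simp: uniform_basis_def)
  obtain c where x: "x = lincomb (n * (k + 1)) c (cbasis n B)"
    using assms(3) by (auto simp: span_vecs_def)
  obtain m0 where m0: "m0 < k + 1" "c m0 \<noteq> 0"
    using assms(4) B(1) lincomb_eq_zero_vec[of "cbasis n B" c] unfolding x by fastforce
  show ?thesis
  proof (cases "\<exists>m<k + 1. m \<noteq> m0 \<and> c m \<noteq> 0")
    case True
    then obtain m1 where m1: "m1 < k + 1" "m1 \<noteq> m0" "c m1 \<noteq> 0"
      by blast
    have "d \<le> wt (lincomb n (\<lambda>j. c (cyclic_index k q j)) B)" if q: "q < k + 1" for q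
    proof -
      have "lincomb n (\<lambda>j. c (cyclic_index k q j)) B \<noteq> zero_vec n"
        using m0 m1 q B(1) lincomb_cyclic_index_neq_zero_vec[OF B(3)] by (cases "q = m0") auto
      then show ?thesis
        using B(5) by (auto simp: is_min_dist_def span_vecs_def)
    qed
    then have "(\<Sum>q<k + 1. d) \<le> wt x"
      unfolding x wt_lincomb_cbasis[OF B(2,1)] by (intro sum_mono) simp
    then show ?thesis
      by simp
  next
    case False
    then have "wt x = k * u"
      unfolding x using wt_lincomb_cbasis_single[OF B(2)] B(1,4) m0 by blast
    then show ?thesis
      using assms(2) by simp
  qed
qed

lemma uniform_basis_cbasis:
  assumes "uniform_basis n k u d B" "1 \<le> k" "(k + 1) * d \<le> k * u"
  shows "uniform_basis (n * (k + 1)) (k + 1) (k * u) ((k + 1) * d) (cbasis n B)"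
proof -
  have B: "length B = k" "\<forall>v\<in>set B. length v = n" "lin_indep_vecs n B"
    "\<forall>j<k. wt (B ! j) = u" "wt (vsum n B) = d" "is_min_dist n (span_vecs n B) d"
    using assms(1) by (auto simp: uniform_basis_def)
  have vsum_wt: "wt (vsum (n * (k + 1)) (cbasis n B)) = (k + 1) * d"
    using wt_vsum_cbasis[OF B(2)] B(1,5) by simp
  obtain y where "y \<in> span_vecs n B" "y \<noteq> zero_vec n" "wt y = d"
    using B(6) by (auto simp: is_min_dist_def)
  then have "0 < d"
    using wt_eq_0_iff[of y] by (auto simp: span_vecs_def)
  then have "vsum (n * (k + 1)) (cbasis n B) \<noteq> zero_vec (n * (k + 1))"
    using vsum_wt by auto
  moreover have "vsum (n * (k + 1)) (cbasis n B) \<in> span_vecs (n * (k + 1)) (cbasis n B)"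
    by (simp add: vsum_eq_lincomb span_vecs_def)
  ultimately have "is_min_dist (n * (k + 1)) (span_vecs (n * (k + 1)) (cbasis n B)) ((k + 1) * d)"
    using min_wt_span_cbasis[OF assms(1,3)] vsum_wt by (auto simp: is_min_dist_def)
  moreover have "\<forall>v\<in>set (cbasis n B). length v = n * (k + 1)"
    using length_cbasis_nth[OF B(2)] B(1) by (auto simp: in_set_conv_nth)
  ultimately show ?thesis
    using lin_indep_cbasis[OF B(3,2)] wt_cbasis_nth[OF B(2)] B assms(2) vsum_wt
    by (auto simp: uniform_basis_def)
qed

section \<open>The codes C(i) and their iterates\<close>

lemma neg_one_power_diff_2: "2 \<le> x \<Longrightarrow> (-1::'a::ring_1) ^ (x - 2) = (-1) ^ x"
  by (simp add: minus_one_power_iff)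

lemma Bmat_eq:
  "1 \<le> i \<Longrightarrow> r < 2 \<Longrightarrow> c < 2 * i \<Longrightarrow> (Bmat i r c :: 'a::field) = (-1) ^ (r + c)"
proof (induction i r c rule: Bmat.induct)
  case (3 i r c)
  then show ?case
    using neg_one_power_diff_2[of "r + c", where 'a = 'a]
    by (cases "c < 2") (auto simp: B1_def less_2_cases_iff)
qed (auto simp: B1_def less_2_cases_iff)

lemma Amat_eq:
  "1 \<le> i \<Longrightarrow> r < 2 * i \<Longrightarrow> c < 2 * i \<Longrightarrow>
    (Amat i r c :: 'a::field) = (-1) ^ (r + c) * of_int (sgn (int c - int r))"
proof (induction i r c rule: Amat.induct)
  case (3 i r c)
  consider "r < 2" "c < 2" | "r < 2" "\<not> c < 2" | "\<not> r < 2" "c < 2" | "\<not> r < 2" "\<not> c < 2"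
    by blast
  then show ?case
  proof cases
    case 1
    then show ?thesis by (auto simp: A1_def less_2_cases_iff)
  next
    case 2
    then show ?thesis
      using "3.prems" Bmat_eq[of "Suc i" r "c - 2", where 'a = 'a] neg_one_power_diff_2[of "r + c", where 'a = 'a]
      by (simp add: sgn_if)
  next
    case 3
    then show ?thesis
      using "3.prems" Bmat_eq[of "Suc i" c "r - 2", where 'a = 'a] neg_one_power_diff_2[of "r + c", where 'a = 'a]
      by (simp add: sgn_if add.commute)
  next
    case 4
    then have "int (c - 2) - int (r - 2) = int c - int r"
      "(-1::'a) ^ ((r - 2) + (c - 2)) = (-1) ^ (r + c)"
      by (simp_all add: minus_one_power_iff)
    then show ?thesis
      using 4 "3.prems" "3.IH" by simp
  qed
qed (auto simp: A1_def less_2_cases_iff)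

lemma sum_neg_one_power: "(\<Sum>c<m. (-1::'a::ring_1) ^ c) = (if even m then 0 else 1)"
  by (induction m) auto

lemma sum_neg_one_power_sgn:
  "(\<Sum>c<m. (-1) ^ c * of_int (sgn (int c - int r))) =
    (if m \<le> r then - (\<Sum>c<m. (-1) ^ c)
     else (\<Sum>c<m. (-1) ^ c) - 2 * (\<Sum>c<r. (-1) ^ c) - ((-1) ^ r :: 'a::ring_1))"
proof (induction m)
  case (Suc m)
  consider "Suc m \<le> r" | "m = r" | "r < m"
    by linarith
  then show ?case
    using Suc by cases (auto simp: sgn_if algebra_simps mult_2)
qed simp

lemma length_Bi [simp]: "length (Bi i) = 2 * i - 1"
  by (simp add: Bi_def)

lemma Bi_nth: "c < 2 * i - 1 \<Longrightarrow> Bi i ! c = map (\<lambda>r. Amat i r c) [0..<2 * i]"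
  by (simp add: Bi_def)

lemma length_Bi_elem: "\<forall>v\<in>set (Bi i). length v = 2 * i"
  by (simp add: Bi_def)

lemma wt_Bi_nth:
  assumes "1 \<le> i" "c < 2 * i - 1"
  shows "wt (Bi i ! c :: 'a::field list) = 2 * i - 1"
proof -
  have "{r. r < 2 * i \<and> (Amat i r c :: 'a) \<noteq> 0} = {..<2 * i} - {c}"
    using assms by (auto simp: Amat_eq sgn_if split: if_splits)
  then show ?thesis
    using assms by (simp add: Bi_nth wt_map_upt)
qed

lemma vsum_Bi:
  assumes "1 \<le> i"
  shows "vsum (2 * i) (Bi i :: 'a::field list list) = map (\<lambda>r. if r = 2 * i - 1 then 1 else 0) [0..<2 * i]"
proof (rule nth_equalityI)
  fix r assume "r < length (vsum (2 * i) (Bi i :: 'a list list))"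
  then have r: "r < 2 * i"
    by (simp add: vsum_def)
  define m where "m = 2 * i - 1"
  have m: "odd m" "2 * i = m + 1"
    using assms by (auto simp: m_def)
  have "vsum (2 * i) (Bi i :: 'a list list) ! r = (\<Sum>c<m. Bi i ! c ! r)"
    using r by (simp add: vsum_def m_def)
  also have "\<dots> = (\<Sum>c<m. (-1) ^ r * ((-1) ^ c * of_int (sgn (int c - int r))))"
    using r assms by (intro sum.cong) (simp_all add: Bi_nth Amat_eq m_def power_add mult.assoc)
  also have "\<dots> = (-1) ^ r * (\<Sum>c<m. (-1) ^ c * of_int (sgn (int c - int r)))"
    by (simp only: sum_distrib_left)
  also have "\<dots> = (if r = m then 1 else 0)"
  proof (cases "r = m")
    case True
    then show ?thesis
      using m by (simp only: sum_neg_one_power_sgn) (simp add: sum_neg_one_power)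
  next
    case False
    then have "r < m"
      using r m by simp
    then show ?thesis
      using m by (simp only: sum_neg_one_power_sgn sum_neg_one_power) (simp add: minus_one_power_iff)
  qed
  finally show "vsum (2 * i) (Bi i :: 'a list list) ! r = map (\<lambda>r. if r = 2 * i - 1 then 1 else 0) [0..<2 * i] ! r"
    using r by (simp add: m_def)
qed (simp add: vsum_def)

lemma wt_vsum_Bi: "1 \<le> i \<Longrightarrow> wt (vsum (2 * i) (Bi i :: 'a::field list list)) = 1"
  by (simp add: vsum_Bi wt_map_upt)

lemma lin_indep_Bi:
  assumes "1 \<le> i"
  shows "lin_indep_vecs (2 * i) (Bi i :: 'a::field list list)"
  unfolding lin_indep_vecs_def
proof (intro allI impI)
  fix x :: "nat \<Rightarrow> 'a" and c0
  assume zero: "lincomb (2 * i) x (Bi i) = zero_vec (2 * i)" and c0: "c0 < length (Bi i)"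
  define m where "m = 2 * i - 1"
  define y where "y c = (-1) ^ c * x c" for c
  \<comment> \<open>Row r says that the y c with c > r and those with c < r have equal sums.  The last row
    gives sum y = 0, and then rows 0, 1, ... force y 0 = y 1 = ... = 0 in turn.\<close>
  have row: "(\<Sum>c<m. y c * of_int (sgn (int c - int r))) = 0" if r: "r < 2 * i" for r
  proof -
    have "0 = lincomb (2 * i) x (Bi i) ! r"
      using zero r by (simp add: zero_vec_def)
    also have "\<dots> = (\<Sum>c<m. x c * Bi i ! c ! r)"
      using r by (simp add: nth_lincomb m_def)
    also have "\<dots> = (\<Sum>c<m. (-1) ^ r * (y c * of_int (sgn (int c - int r))))"
      using r assms by (intro sum.cong) (simp_all add: Bi_nth Amat_eq m_def y_def power_add)
    finally show ?thesis
      by (simp add: sum_distrib_left[symmetric])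
  qed
  have total: "(\<Sum>c<m. y c) = 0"
    using row[of m] assms by (simp add: m_def sum_negf)
  have prefix_zero: "\<forall>c<r. y c = 0" if "r \<le> m" for r
    using that
  proof (induction r)
    case (Suc r)
    then have IH: "\<forall>c<r. y c = 0" and "r < m"
      by auto
    have "(\<Sum>c<m. if r < c then y c else 0) = 0"
    proof -
      have "r < 2 * i"
        using \<open>r < m\<close> by (simp add: m_def)
      moreover have "(\<Sum>c<m. y c * of_int (sgn (int c - int r))) = (\<Sum>c<m. if r < c then y c else 0)"
        using IH by (intro sum.cong) (auto simp: sgn_if)
      ultimately show ?thesis
        using row by simp
    qed
    moreover have "(\<Sum>c<m. y c) = (\<Sum>c<m. (if c = r then y c else 0) + (if r < c then y c else 0))"
      using IH by (intro sum.cong) auto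
    ultimately have "y r = 0"
      using total \<open>r < m\<close> by (simp add: sum.distrib)
    then show ?case
      using IH less_Suc_eq by auto
  qed simp
  have "y c0 = 0"
    using prefix_zero[of m] c0 by (simp add: m_def)
  then show "x c0 = 0"
    by (simp add: y_def)
qed

lemma uniform_basis_Bi:
  assumes "1 \<le> i"
  shows "uniform_basis (2 * i) (2 * i - 1) (2 * i - 1) 1 (Bi i :: 'a::field list list)"
proof -
  have "vsum (2 * i) (Bi i :: 'a list list) \<in> span_vecs (2 * i) (Bi i)"
    by (simp add: vsum_eq_lincomb span_vecs_def)
  moreover have "1 \<le> wt v" if "v \<in> span_vecs (2 * i) (Bi i :: 'a list list)" "v \<noteq> zero_vec (2 * i)" for v
  proof -
    have "length v = 2 * i"
      using that(1) by (auto simp: span_vecs_def)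
    then show ?thesis
      using that(2) wt_eq_0_iff[of v] by simp
  qed
  moreover have "vsum (2 * i) (Bi i :: 'a list list) \<noteq> zero_vec (2 * i)"
    using wt_vsum_Bi[OF assms, where 'a = 'a] by auto
  ultimately have "is_min_dist (2 * i) (span_vecs (2 * i) (Bi i :: 'a list list)) 1"
    unfolding is_min_dist_def using wt_vsum_Bi[OF assms, where 'a = 'a] by blast
  then show ?thesis
    using lin_indep_Bi[OF assms, where 'a = 'a] wt_Bi_nth[OF assms, where 'a = 'a]
      wt_vsum_Bi[OF assms, where 'a = 'a] length_Bi_elem[of i, where 'a = 'a]
    by (simp add: uniform_basis_def)
qed

lemma Basis_it_uniform_basis:
  assumes "uniform_basis n k u d B" "1 \<le> k"
    and "\<And>j'. j' < j \<Longrightarrow>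
      (k + j' + 1) * (d * (\<Prod>l=1..j'. k + l)) \<le> (k + j') * (u * (\<Prod>l=1..j'. k - 1 + l))"
  shows "fst (Basis_it j n B) = n * (\<Prod>l=1..j. k + l) \<and>
    uniform_basis (n * (\<Prod>l=1..j. k + l)) (k + j) (u * (\<Prod>l=1..j. k - 1 + l)) (d * (\<Prod>l=1..j. k + l))
      (snd (Basis_it j n B))"
  using assms(3)
proof (induction j)
  case 0
  then show ?case
    using assms(1) by (simp add: Basis_it_def)
next
  case (Suc j)
  let ?P = "\<Prod>l=1..j. k + l" and ?Q = "\<Prod>l=1..j. k - 1 + l" and ?B = "snd (Basis_it j n B)"
  have IH: "fst (Basis_it j n B) = n * ?P" "uniform_basis (n * ?P) (k + j) (u * ?Q) (d * ?P) ?B"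
    using Suc by auto
  have "uniform_basis (n * ?P * (k + j + 1)) (k + j + 1) ((k + j) * (u * ?Q)) ((k + j + 1) * (d * ?P))
      (cbasis (n * ?P) ?B)"
    using IH(2) assms(2) Suc.prems[of j] by (intro uniform_basis_cbasis) simp_all
  moreover have "Basis_it (Suc j) n B = (n * ?P * (k + j + 1), cbasis (n * ?P) ?B)"
    using IH by (simp add: Basis_it_def basis_step_def uniform_basis_def)
  moreover have "k - 1 + Suc j = k + j"
    using assms(2) by simp
  ultimately show ?case
    by (simp add: prod.cl_ivl_Suc algebra_simps)
qed

lemma prod_shift_telescope:
  "(\<Prod>l=1..j. b + l) * (b + 1 + j) = (b + 1) * (\<Prod>l=1..j. b + 1 + l :: nat)"
  by (induction j) (simp_all add: prod.cl_ivl_Suc algebra_simps)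

lemma Bi_iteration_bound:
  fixes i j :: nat
  assumes "2 \<le> i" "j \<le> 4 * i^2 - 6 * i + 1"
  shows "(2 * i - 1 + j + 1) * (\<Prod>l=1..j. 2 * i - 1 + l)
       \<le> (2 * i - 1 + j) * ((2 * i - 1) * (\<Prod>l=1..j. 2 * i - 2 + l))"
proof -
  define t where "t = i - 2"
  have t: "i = t + 2"
    using assms(1) by (simp add: t_def)
  have "4 * i^2 - 6 * i + 1 = 4 * t^2 + 10 * t + 5" "(2 * i - 1) * (2 * i - 1) = 4 * t^2 + 12 * t + 9"
    unfolding t by (simp_all add: power2_eq_square algebra_simps)
  then have "2 * i + j \<le> (2 * i - 1) * (2 * i - 1)"
    using assms(2) t by simp
  then have "(2 * i + j) * (\<Prod>l=1..j. 2 * i - 1 + l) \<le> (2 * i - 1) * ((2 * i - 1) * (\<Prod>l=1..j. 2 * i - 1 + l))"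
    by simp
  also have "\<dots> = (2 * i - 1) * ((\<Prod>l=1..j. 2 * i - 2 + l) * (2 * i - 1 + j))"
  proof -
    have "2 * i - 2 + 1 = 2 * i - 1"
      using assms(1) by simp
    then show ?thesis
      using prod_shift_telescope[of "2 * i - 2" j] by simp
  qed
  also have "\<dots> = (2 * i - 1 + j) * ((2 * i - 1) * (\<Prod>l=1..j. 2 * i - 2 + l))"
    by (simp only: mult.commute mult.left_commute)
  finally show ?thesis
    using assms(1) by simp
qed

lemma Code_it_Bi_u_bounded:
  fixes i j :: nat
  assumes "2 \<le> i" "j \<le> 4 * i^2 - 6 * i + 1"
  shows "is_code (2 * i * (\<Prod>l=1..j. 2 * i - 1 + l)) (2 * i - 1 + j) (\<Prod>l=1..j. 2 * i - 1 + l)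
      (Code_it j (2 * i) (Bi i) :: 'a::field list set) \<and>
    u_bounded (2 * i * (\<Prod>l=1..j. 2 * i - 1 + l)) ((2 * i - 1) * (\<Prod>l=1..j. 2 * i - 2 + l))
      (Code_it j (2 * i) (Bi i) :: 'a list set) (snd (Basis_it j (2 * i) (Bi i)))"
proof -
  let ?N = "2 * i * (\<Prod>l=1..j. 2 * i - 1 + l)" and ?B = "snd (Basis_it j (2 * i) (Bi i :: 'a list list))"
  have k: "1 \<le> 2 * i - 1" and k_pred: "2 * i - 1 - 1 = 2 * i - 2"
    using assms(1) by simp_all
  have B: "uniform_basis (2 * i) (2 * i - 1) (2 * i - 1) 1 (Bi i :: 'a list list)"
    using assms(1) by (intro uniform_basis_Bi) simp
  have iterate: "fst (Basis_it j (2 * i) (Bi i :: 'a list list)) = ?N \<and>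
    uniform_basis ?N (2 * i - 1 + j) ((2 * i - 1) * (\<Prod>l=1..j. 2 * i - 2 + l)) (\<Prod>l=1..j. 2 * i - 1 + l) ?B"
    using Basis_it_uniform_basis[OF B k, of j, unfolded k_pred] Bi_iteration_bound[OF assms(1)] assms(2)
    by simp
  have "is_code ?N (2 * i - 1 + j) (\<Prod>l=1..j. 2 * i - 1 + l) (span_vecs ?N ?B) \<and>
    u_bounded ?N ((2 * i - 1) * (\<Prod>l=1..j. 2 * i - 2 + l)) (span_vecs ?N ?B) ?B"
    using k by (intro uniform_basis_imp_code_u_bounded[OF conjunct2[OF iterate] _ Bi_iteration_bound[OF assms]]) simp
  then show ?thesis
    using conjunct1[OF iterate] unfolding Code_it_def by simp
qed

theorem proposition4p5:
  fixes i :: nat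
  assumes "2 \<le> i"
  shows "(is_code (2*i) (2*i-1) 1 (Ci i :: 'a::field list set) \<and>
          u_bounded (2*i) (2*i-1) (Ci i :: 'a list set) (Bi i)) \<and>
         (\<forall>j::nat. 1 \<le> j \<and> j \<le> 4*i^2 - 6*i + 1 \<longrightarrow>
            is_code (2*i * (\<Prod>l=1..j. 2*i-1+l)) (2*i-1+j) (\<Prod>l=1..j. 2*i-1+l)
                    (Code_it j (2*i) (Bi i) :: 'a list set) \<and>
            u_bounded (2*i * (\<Prod>l=1..j. 2*i-1+l)) ((2*i-1) * (\<Prod>l=1..j. 2*i-2+l))
                    (Code_it j (2*i) (Bi i) :: 'a list set) (snd (Basis_it j (2*i) (Bi i))))"
proof -
  have "Code_it 0 (2 * i) (Bi i) = (Ci i :: 'a list set)" "snd (Basis_it 0 (2 * i) (Bi i :: 'a list list)) = Bi i"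
    by (simp_all add: Code_it_def Basis_it_def Ci_def)
  then show ?thesis
    using Code_it_Bi_u_bounded[OF assms, of 0, where 'a = 'a] Code_it_Bi_u_bounded[OF assms, where 'a = 'a]
    by simp
qed

end
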